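(* Let $F$ be a cellular automaton on $A^{\mathbb Z}$ and $\mu$ a $\sigma$-ergodic, $F$-invariant Borel probability measure such that $F$ is $\mu$-equicontinuous. Then $h_\mu(F)=0$.
   Context: $A$ is a finite alphabet, $\sigma(x)_i=x_{i+1}$, and $d(x,y)=2^{-\min\{|j|:x_j\ne y_j\}}$. $F$ is a cellular automaton of radius $r$, i.e. $F(x)_i=f(x_{i-r},\dots,x_{i+r})$. $B_n(x)=\{y:d(F^ix,F^iy)<2^{-n}\ \forall i\ge0\}$. $F$ is $\mu$-equicontinuous if there is a point $x$ with $\mu(B_r(x))>0$. $h_\mu(F)$ is the measure-theoretic entropy of $F$. *)

theory Defs
  imports "HOL-Probability.Probability"
begin

definition shift :: "(int \<Rightarrow> 'a) \<Rightarrow> (int \<Rightarrow> 'a)" where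
  "shift x = (\<lambda>i. x (i + 1))"

definition cellular_automaton :: "((int \<Rightarrow> 'a) \<Rightarrow> (int \<Rightarrow> 'a)) \<Rightarrow> nat \<Rightarrow> bool" where
  "cellular_automaton F r \<longleftrightarrow>
     (\<exists>f :: 'a list \<Rightarrow> 'a. \<forall>x i. F x i = f (map x [i - int r .. i + int r]))"

definition cantor_dist :: "(int \<Rightarrow> 'a) \<Rightarrow> (int \<Rightarrow> 'a) \<Rightarrow> real" where
  "cantor_dist x y =
     (if x = y then 0 else 2 powr (- real (LEAST k::nat. \<exists>j. nat \<bar>j\<bar> = k \<and> x j \<noteq> y j)))"

definition Bball :: "((int \<Rightarrow> 'a) \<Rightarrow> (int \<Rightarrow> 'a)) \<Rightarrow> nat \<Rightarrow> (int \<Rightarrow> 'a) \<Rightarrow> (int \<Rightarrow> 'a) set" where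
  "Bball F n x = {y. \<forall>i::nat. cantor_dist ((F ^^ i) x) ((F ^^ i) y) < 2 powr (- real n)}"

(* Borel sigma-algebra of A^Z = product sigma-algebra of discrete factors *)
definition full_shift_space :: "(int \<Rightarrow> 'a) measure" where
  "full_shift_space = PiM UNIV (\<lambda>_. count_space UNIV)"

(* F is mu-equicontinuous (r = radius of F) *)
definition mu_equicontinuous :: "(int \<Rightarrow> 'a) measure \<Rightarrow> ((int \<Rightarrow> 'a) \<Rightarrow> (int \<Rightarrow> 'a)) \<Rightarrow> nat \<Rightarrow> bool" where
  "mu_equicontinuous \<mu> F r \<longleftrightarrow> (\<exists>x. emeasure \<mu> (Bball F r x) > 0)"

definition invariant_measure :: "'b measure \<Rightarrow> ('b \<Rightarrow> 'b) \<Rightarrow> bool" where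
  "invariant_measure \<mu> T \<longleftrightarrow> T \<in> measurable \<mu> \<mu> \<and> distr \<mu> \<mu> T = \<mu>"

definition ergodic :: "'b measure \<Rightarrow> ('b \<Rightarrow> 'b) \<Rightarrow> bool" where
  "ergodic \<mu> T \<longleftrightarrow> invariant_measure \<mu> T \<and>
     (\<forall>A \<in> sets \<mu>. T -` A \<inter> space \<mu> = A \<longrightarrow> measure \<mu> A = 0 \<or> measure \<mu> A = 1)"

definition finite_meas_partition :: "'b measure \<Rightarrow> 'b set set \<Rightarrow> bool" where
  "finite_meas_partition \<mu> P \<longleftrightarrow> finite P \<and> P \<subseteq> sets \<mu> \<and> \<Union>P = space \<mu> \<and>
     (\<forall>A\<in>P. \<forall>B\<in>P. A \<noteq> B \<longrightarrow> A \<inter> B = {})"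

definition partition_entropy :: "'b measure \<Rightarrow> 'b set set \<Rightarrow> real" where
  "partition_entropy \<mu> P = - (\<Sum>A\<in>P. measure \<mu> A * ln (measure \<mu> A))"

definition iter_join :: "'b measure \<Rightarrow> ('b \<Rightarrow> 'b) \<Rightarrow> 'b set set \<Rightarrow> nat \<Rightarrow> 'b set set" where
  "iter_join \<mu> T P n =
     {space \<mu> \<inter> (\<Inter>i<n. (T ^^ i) -` c i) | c. \<forall>i<n. c i \<in> P}"

definition partition_entropy_rate :: "'b measure \<Rightarrow> ('b \<Rightarrow> 'b) \<Rightarrow> 'b set set \<Rightarrow> real" where
  "partition_entropy_rate \<mu> T P =
     lim (\<lambda>n. partition_entropy \<mu> (iter_join \<mu> T P (Suc n)) / real (Suc n))"

definition ks_entropy :: "'b measure \<Rightarrow> ('b \<Rightarrow> 'b) \<Rightarrow> ereal" where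
  "ks_entropy \<mu> T = (SUP P \<in> {P. finite_meas_partition \<mu> P}. ereal (partition_entropy_rate \<mu> T P))"

end

theory Submission
  imports Defs
begin

text \<open>Choose \<open>x0\<close> with \<open>\<mu>(B\<^sub>r(x0)) > 0\<close>. Every point of \<open>B\<^sub>r(x0)\<close> copies, along
  its whole \<open>F\<close>-orbit, the window \<open>[-r, r]\<close> of the orbit of \<open>x0\<close>; since \<open>F\<close> has
  radius \<open>r\<close>, no information crosses such a wall. By ergodicity of the shift and of its inverse,
  all points outside a set of measure \<open>\<delta>\<close> have walls on both sides of the origin within a
  bounded distance \<open>m\<close>. Approximating a partition by cylinder sets, the cell of a point is a
  local function of the point outside a set \<open>D\<close> of measure \<open>\<delta>\<close>. Hence the first \<open>n\<close>
  cells of the itinerary of \<open>z\<close> are determined, except at the times \<open>i\<close> with \<open>F\<^sup>i z \<in> D\<close>,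
  by the finitely many possible contents of \<open>z\<close> between the walls, so the entropy of the
  itinerary is at most a constant plus \<open>n O(\<surd>\<delta> + \<delta> log |P|)\<close>. As \<open>\<delta>\<close> is arbitrary, every
  partition has entropy rate \<open>0\<close>.\<close>

section \<open>Entropy of finite-valued random variables\<close>

lemma mult_ln_le_gibbs:
  fixes p q :: real
  assumes "0 \<le> p" "0 \<le> q" "p > 0 \<Longrightarrow> q > 0"
  shows "p * ln q \<le> p * ln p + q - p"
proof (cases "p = 0")
  case True
  then show ?thesis using assms by simp
next
  case False
  then have "p > 0" "q > 0" using assms by auto
  then have "p * ln (q / p) \<le> p * (q / p - 1)"
    by (intro mult_left_mono ln_le_minus_one) auto
  then show ?thesis using \<open>p > 0\<close> \<open>q > 0\<close> by (simp add: ln_div right_diff_distrib)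
qed

lemma minus_mult_ln_le_sqrt:
  fixes t :: real
  assumes "0 \<le> t"
  shows "- (t * ln t) \<le> 2 * sqrt t"
proof (cases "t = 0")
  case True
  then show ?thesis by simp
next
  case False
  then have t: "t > 0" using assms by simp
  have "- ln t = 2 * ln (1 / sqrt t)"
    using t by (simp add: ln_div ln_sqrt)
  also have "\<dots> \<le> 2 * (1 / sqrt t - 1)"
    using t by (intro mult_left_mono ln_le_minus_one) auto
  also have "\<dots> \<le> 2 / sqrt t"
    by simp
  finally have "t * (- ln t) \<le> t * (2 / sqrt t)"
    using t by (intro mult_left_mono) auto
  also have "t * (2 / sqrt t) = 2 * sqrt t"
    using t by (simp add: field_simps real_div_sqrt)
  finally show ?thesis by simp
qed

lemma mult_ln_ge_minus_one:
  fixes s :: real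
  assumes "0 \<le> s"
  shows "s - 1 \<le> s * ln s"
proof (cases "s = 0")
  case True
  then show ?thesis by simp
next
  case False
  then have s: "s > 0" using assms by simp
  have "- ln s = ln (1 / s)"
    using s by (simp add: ln_div)
  also have "\<dots> \<le> 1 / s - 1"
    using s by (intro ln_le_minus_one) simp
  finally have "s * (- ln s) \<le> s * (1 / s - 1)"
    using s by (intro mult_left_mono) auto
  also have "\<dots> = 1 - s"
    using s by (simp add: field_simps)
  finally show ?thesis by simp
qed

lemma binary_entropy_le_sqrt:
  fixes t :: real
  assumes "0 \<le> t" "t \<le> 1"
  shows "- (t * ln t) - (1 - t) * ln (1 - t) \<le> 3 * sqrt t"
proof -
  have "t = sqrt t * sqrt t"
    using assms by simp
  also have "\<dots> \<le> sqrt t"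
    using assms by (intro mult_left_le_one_le) auto
  finally have "t \<le> sqrt t" .
  then show ?thesis
    using minus_mult_ln_le_sqrt[of t] mult_ln_ge_minus_one[of "1 - t"] assms by linarith
qed

lemma simple_function_map:
  assumes "\<And>i. i \<in> set xs \<Longrightarrow> simple_function M (X i)"
  shows "simple_function M (\<lambda>z. map (\<lambda>i. X i z) xs)"
  using assms
proof (induction xs)
  case (Cons a xs)
  then have "simple_function M (\<lambda>z. (X a z, map (\<lambda>i. X i z) xs))"
    by (intro simple_function_Pair) auto
  from simple_function_compose1[OF this, of "\<lambda>(x, l). x # l"] show ?case
    by simp
qed simp

lemma simple_function_mem:
  assumes "S \<in> sets M"
  shows "simple_function M (\<lambda>z. z \<in> S)"
proof -
  have "(\<lambda>z. z \<in> S) -` {v} \<inter> space M = (if v then S else space M - S)" for v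
    using sets.sets_into_space[OF assms] by auto
  then show ?thesis
    using assms unfolding simple_function_def by auto
qed

context prob_space
begin

definition prob_value :: "('a \<Rightarrow> 'b) \<Rightarrow> 'b \<Rightarrow> real" where
  "prob_value X v = prob (X -` {v} \<inter> space M)"

definition simple_entropy :: "('a \<Rightarrow> 'b) \<Rightarrow> real" where
  "simple_entropy X = - (\<Sum>v\<in>X ` space M. prob_value X v * ln (prob_value X v))"

lemma prob_value_nonneg [simp]: "0 \<le> prob_value X v"
  by (simp add: prob_value_def)

lemma prob_value_le_1 [simp]: "prob_value X v \<le> 1"
  by (simp add: prob_value_def)

lemma prob_value_mono:
  assumes "X -` {x} \<inter> space M \<subseteq> Y -` {y}" "simple_function M Y"
  shows "prob_value X x \<le> prob_value Y y"
  unfolding prob_value_def using assms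
  by (intro finite_measure_mono) (auto dest: simple_functionD(2))

lemma sum_prob_value_comp:
  assumes X: "simple_function M X"
  shows "(\<Sum>v\<in>X ` space M. prob_value X v * g (f v)) =
    (\<Sum>u\<in>(\<lambda>z. f (X z)) ` space M. prob_value (\<lambda>z. f (X z)) u * g u)"
proof -
  have fin: "finite (X ` space M)"
    using X by (rule simple_functionD)
  have "(\<Sum>v\<in>X ` space M. prob_value X v * g (f v)) =
      (\<Sum>u\<in>f ` X ` space M. (\<Sum>v\<in>{v\<in>X ` space M. f v = u}. prob_value X v) * g u)"
    by (subst sum.image_gen[OF fin, where g = f]) (auto intro!: sum.cong simp: sum_distrib_right)
  also have "\<dots> = (\<Sum>u\<in>f ` X ` space M. prob_value (\<lambda>z. f (X z)) u * g u)"
  proof (intro sum.cong refl arg_cong2[where f = "(*)"])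
    fix u
    have fiber: "(\<lambda>z. f (X z)) -` {u} \<inter> space M = (\<Union>v\<in>{v\<in>X ` space M. f v = u}. X -` {v} \<inter> space M)"
      by auto
    have "(\<Sum>v\<in>{v\<in>X ` space M. f v = u}. prob (X -` {v} \<inter> space M)) =
        prob (\<Union>v\<in>{v\<in>X ` space M. f v = u}. X -` {v} \<inter> space M)"
      using X fin by (intro finite_measure_finite_Union[symmetric])
        (auto simp: disjoint_family_on_def simple_functionD(2))
    then show "(\<Sum>v\<in>{v\<in>X ` space M. f v = u}. prob_value X v) = prob_value (\<lambda>z. f (X z)) u"
      by (simp only: prob_value_def fiber)
  qed
  finally show ?thesis
    by (simp add: image_image)
qed

lemma sum_prob_value:
  assumes X: "simple_function M X"
  shows "(\<Sum>v\<in>X ` space M. prob_value X v) = 1"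
proof -
  have "(\<Sum>v\<in>X ` space M. prob_value X v) = prob (\<Union>v\<in>X ` space M. X -` {v} \<inter> space M)"
    unfolding prob_value_def using X
    by (intro finite_measure_finite_Union[symmetric])
      (auto simp: disjoint_family_on_def simple_functionD)
  also have "(\<Union>v\<in>X ` space M. X -` {v} \<inter> space M) = space M"
    by auto
  finally show ?thesis
    by (simp add: prob_space)
qed

lemma minus_prob_value_mult_ln_nonneg: "0 \<le> - (prob_value X v * ln (prob_value X v))"
proof (cases "prob_value X v = 0")
  case False
  then have "0 < prob_value X v"
    using prob_value_nonneg[of X v] by linarith
  then have "ln (prob_value X v) \<le> 0"
    by simp
  then show ?thesis
    by (simp add: mult_nonneg_nonpos)
qed simp

lemma simple_entropy_nonneg: "0 \<le> simple_entropy X"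
  unfolding simple_entropy_def sum_negf[symmetric]
  by (intro sum_nonneg minus_prob_value_mult_ln_nonneg)

lemma simple_entropy_le_cross_entropy:
  assumes X: "simple_function M X"
    and q_nonneg: "\<And>v. v \<in> X ` space M \<Longrightarrow> 0 \<le> q v"
    and q_pos: "\<And>v. v \<in> X ` space M \<Longrightarrow> 0 < prob_value X v \<Longrightarrow> 0 < q v"
    and q_sum: "(\<Sum>v\<in>X ` space M. q v) \<le> 1"
  shows "simple_entropy X \<le> - (\<Sum>v\<in>X ` space M. prob_value X v * ln (q v))"
proof -
  have "(\<Sum>v\<in>X ` space M. prob_value X v * ln (q v)) \<le>
      (\<Sum>v\<in>X ` space M. prob_value X v * ln (prob_value X v) + q v - prob_value X v)"
    by (intro sum_mono mult_ln_le_gibbs q_nonneg q_pos) auto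
  also have "\<dots> = (\<Sum>v\<in>X ` space M. prob_value X v * ln (prob_value X v)) +
      (\<Sum>v\<in>X ` space M. q v) - 1"
    using sum_prob_value[OF X] by (simp add: sum.distrib sum_subtractf)
  finally show ?thesis
    using q_sum unfolding simple_entropy_def by linarith
qed

lemma simple_entropy_le_ln_card:
  assumes X: "simple_function M X"
  shows "simple_entropy X \<le> ln (card (X ` space M))"
proof -
  define c where "c = real (card (X ` space M))"
  have "c > 0"
    using simple_functionD(1)[OF X] not_empty by (simp add: c_def card_gt_0_iff)
  have "simple_entropy X \<le> - (\<Sum>v\<in>X ` space M. prob_value X v * ln (1 / c))"
    using \<open>c > 0\<close> by (intro simple_entropy_le_cross_entropy X) (auto simp: c_def)
  also have "\<dots> = ln c"
    using \<open>c > 0\<close> sum_prob_value[OF X] by (simp add: ln_div sum_negf flip: sum_distrib_right)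
  finally show ?thesis
    by (simp add: c_def)
qed

lemma simple_entropy_comp_le:
  assumes X: "simple_function M X"
  shows "simple_entropy (\<lambda>z. f (X z)) \<le> simple_entropy X"
proof -
  let ?Y = "\<lambda>z. f (X z)"
  have "(\<Sum>v\<in>X ` space M. prob_value X v * ln (prob_value X v)) \<le>
      (\<Sum>v\<in>X ` space M. prob_value X v * ln (prob_value ?Y (f v)))"
  proof (intro sum_mono)
    fix v
    have le: "prob_value X v \<le> prob_value ?Y (f v)"
      using simple_function_compose1[OF X] by (rule prob_value_mono[rotated]) auto
    show "prob_value X v * ln (prob_value X v) \<le> prob_value X v * ln (prob_value ?Y (f v))"
    proof (cases "prob_value X v = 0")
      case False
      then have "0 < prob_value X v"
        using prob_value_nonneg[of X v] by linarith
      then have "ln (prob_value X v) \<le> ln (prob_value ?Y (f v))"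
        using le by simp
      then show ?thesis
        using \<open>0 < prob_value X v\<close> by (simp add: mult_left_mono)
    qed simp
  qed
  also have "\<dots> = (\<Sum>u\<in>?Y ` space M. prob_value ?Y u * ln (prob_value ?Y u))"
    by (rule sum_prob_value_comp[OF X])
  finally show ?thesis
    unfolding simple_entropy_def by simp
qed

lemma simple_entropy_pair_le:
  assumes X: "simple_function M X" and Y: "simple_function M Y"
  shows "simple_entropy (\<lambda>z. (X z, Y z)) \<le> simple_entropy X + simple_entropy Y"
proof -
  define Z where "Z = (\<lambda>z. (X z, Y z))"
  have Z: "simple_function M Z"
    unfolding Z_def using X Y by simp
  define q where "q w = prob_value X (fst w) * prob_value Y (snd w)" for w
  have marginals: "prob_value Z w \<le> prob_value X (fst w)" "prob_value Z w \<le> prob_value Y (snd w)" for w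
    using X Y by (auto intro!: prob_value_mono simp: Z_def)
  have split_ln: "prob_value Z w * ln (q w) =
      prob_value Z w * ln (prob_value X (fst w)) + prob_value Z w * ln (prob_value Y (snd w))" for w
  proof (cases "prob_value Z w = 0")
    case False
    then have "0 < prob_value X (fst w)" "0 < prob_value Y (snd w)"
      using marginals[of w] prob_value_nonneg[of Z w] by linarith+
    then show ?thesis
      by (simp add: q_def ln_mult distrib_left)
  qed simp
  have "(\<Sum>w\<in>Z ` space M. q w) \<le> (\<Sum>w\<in>X ` space M \<times> Y ` space M. q w)"
    using X Y by (intro sum_mono2) (auto simp: Z_def q_def simple_functionD(1))
  also have "\<dots> = (\<Sum>x\<in>X ` space M. \<Sum>y\<in>Y ` space M. prob_value X x * prob_value Y y)"
    unfolding q_def sum.cartesian_product by (simp add: case_prod_beta)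
  also have "\<dots> = 1"
    using sum_prob_value[OF X] sum_prob_value[OF Y] by (simp flip: sum_product)
  finally have "simple_entropy Z \<le> - (\<Sum>w\<in>Z ` space M. prob_value Z w * ln (q w))"
  proof (intro simple_entropy_le_cross_entropy Z)
    show "0 < q w" if "0 < prob_value Z w" for w
      using that marginals[of w] unfolding q_def by (intro mult_pos_pos) linarith+
  qed (simp add: q_def)
  also have "\<dots> = simple_entropy X + simple_entropy Y"
    unfolding simple_entropy_def split_ln sum.distrib
    using sum_prob_value_comp[OF Z, of "\<lambda>x. ln (prob_value X x)" fst]
      sum_prob_value_comp[OF Z, of "\<lambda>y. ln (prob_value Y y)" snd]
    by (simp add: Z_def)
  finally show ?thesis
    by (simp add: Z_def)
qed

lemma card_fiber_pos:
  assumes "simple_function M X" "j \<in> S ` space M"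
  shows "0 < card (X ` (S -` {j} \<inter> space M))"
proof -
  have "finite (X ` (S -` {j} \<inter> space M))"
    using simple_functionD(1)[OF assms(1)] by (rule finite_subset[rotated]) auto
  then show ?thesis
    using assms(2) by (auto simp: card_gt_0_iff)
qed

lemma sum_prob_value_div_card_fiber:
  assumes X: "simple_function M X" and S: "simple_function M S"
  shows "(\<Sum>(j, x)\<in>(\<lambda>z. (S z, X z)) ` space M. prob_value S j / card (X ` (S -` {j} \<inter> space M))) = 1"
proof -
  have "(\<lambda>z. (S z, X z)) ` space M = Sigma (S ` space M) (\<lambda>j. X ` (S -` {j} \<inter> space M))"
    by (auto simp: image_iff) metis
  then have "(\<Sum>(j, x)\<in>(\<lambda>z. (S z, X z)) ` space M. prob_value S j / card (X ` (S -` {j} \<inter> space M))) =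
      (\<Sum>j\<in>S ` space M. \<Sum>x\<in>X ` (S -` {j} \<inter> space M). prob_value S j / card (X ` (S -` {j} \<inter> space M)))"
    using simple_functionD(1)[OF S] simple_functionD(1)[OF X]
    by (simp only:) (subst sum.Sigma, auto intro: finite_subset)
  also have "\<dots> = (\<Sum>j\<in>S ` space M. prob_value S j)"
  proof (intro sum.cong refl)
    fix j assume "j \<in> S ` space M"
    then show "(\<Sum>x\<in>X ` (S -` {j} \<inter> space M). prob_value S j / card (X ` (S -` {j} \<inter> space M))) =
        prob_value S j"
      using card_fiber_pos[OF X, of j S] by simp
  qed
  finally show ?thesis
    using sum_prob_value[OF S] by simp
qed

lemma simple_entropy_pair_le_fibers:
  fixes X :: "'a \<Rightarrow> 'b" and S :: "'a \<Rightarrow> 'c"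
  assumes X: "simple_function M X" and S: "simple_function M S"
  shows "simple_entropy (\<lambda>z. (S z, X z)) \<le> simple_entropy S +
    (\<Sum>j\<in>S ` space M. prob_value S j * ln (card (X ` (S -` {j} \<inter> space M))))"
proof -
  define N where "N j = real (card (X ` (S -` {j} \<inter> space M)))" for j
  define Z where "Z = (\<lambda>z. (S z, X z))"
  define q :: "'c \<times> 'b \<Rightarrow> real" where "q = (\<lambda>(j, x). prob_value S j / N j)"
  have q_eq: "q w = prob_value S (fst w) / N (fst w)" for w
    by (cases w) (simp add: q_def)
  have Z: "simple_function M Z"
    unfolding Z_def using X S by simp
  have N_pos: "N (fst w) > 0" if "w \<in> Z ` space M" for w
    using card_fiber_pos[OF X, of _ S] that by (auto simp: N_def Z_def)
  have marginal: "prob_value Z w \<le> prob_value S (fst w)" for w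
    using S by (auto intro!: prob_value_mono simp: Z_def)
  have "simple_entropy Z \<le> - (\<Sum>w\<in>Z ` space M. prob_value Z w * ln (q w))"
  proof (rule simple_entropy_le_cross_entropy[OF Z])
    show "(\<Sum>w\<in>Z ` space M. q w) \<le> 1"
      using sum_prob_value_div_card_fiber[OF X S] by (simp add: q_def N_def Z_def)
    fix w assume w: "w \<in> Z ` space M"
    show "0 \<le> q w"
      using N_pos[OF w] by (simp add: q_eq)
    assume "0 < prob_value Z w"
    then show "0 < q w"
      using marginal[of w] N_pos[OF w] unfolding q_eq by (intro divide_pos_pos) linarith+
  qed
  also have "(\<Sum>w\<in>Z ` space M. prob_value Z w * ln (q w)) =
      (\<Sum>w\<in>Z ` space M. prob_value Z w * (ln (prob_value S (fst w)) - ln (N (fst w))))"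
  proof (intro sum.cong refl)
    fix w assume w: "w \<in> Z ` space M"
    show "prob_value Z w * ln (q w) = prob_value Z w * (ln (prob_value S (fst w)) - ln (N (fst w)))"
    proof (cases "prob_value Z w = 0")
      case False
      then have "0 < prob_value S (fst w)"
        using marginal[of w] prob_value_nonneg[of Z w] by linarith
      then show ?thesis
        using N_pos[OF w] by (simp add: q_eq ln_div)
    qed simp
  qed
  also have "\<dots> = (\<Sum>j\<in>S ` space M. prob_value S j * (ln (prob_value S j) - ln (N j)))"
    using sum_prob_value_comp[OF Z, of "\<lambda>j. ln (prob_value S j) - ln (N j)" fst]
    by (simp add: Z_def)
  finally show ?thesis
    unfolding simple_entropy_def by (simp add: right_diff_distrib sum_subtractf N_def Z_def)
qed

lemma simple_entropy_le_fibers: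
  assumes X: "simple_function M X" and S: "simple_function M S"
  shows "simple_entropy X \<le> simple_entropy S +
    (\<Sum>j\<in>S ` space M. prob_value S j * ln (card (X ` (S -` {j} \<inter> space M))))"
  using simple_entropy_comp_le[OF simple_function_Pair[OF S X], of snd]
    simple_entropy_pair_le_fibers[OF X S]
  by simp

lemma simple_entropy_bool_le:
  fixes X :: "'a \<Rightarrow> bool"
  assumes X: "simple_function M X" and d: "prob_value X True \<le> d"
  shows "simple_entropy X \<le> 3 * sqrt d"
proof -
  define t where "t = prob_value X True"
  have "prob_value X False = prob (space M - (X -` {True} \<inter> space M))"
    unfolding prob_value_def by (rule arg_cong[where f = prob]) auto
  also have "\<dots> = 1 - t"
    unfolding t_def prob_value_def using X by (intro prob_compl simple_functionD(2))
  finally have false: "prob_value X False = 1 - t" .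
  have "simple_entropy X = (\<Sum>v\<in>X ` space M. - (prob_value X v * ln (prob_value X v)))"
    unfolding simple_entropy_def by (simp add: sum_negf)
  also have "\<dots> \<le> (\<Sum>v\<in>UNIV. - (prob_value X v * ln (prob_value X v)))"
    by (intro sum_mono2 minus_prob_value_mult_ln_nonneg) simp_all
  also have "\<dots> = - (t * ln t) - (1 - t) * ln (1 - t)"
    by (simp add: UNIV_bool false flip: t_def)
  also have "\<dots> \<le> 3 * sqrt t"
    by (rule binary_entropy_le_sqrt) (simp_all add: t_def)
  also have "\<dots> \<le> 3 * sqrt d"
    using d by (simp add: t_def)
  finally show ?thesis .
qed

lemma sum_prob_value_of_bool:
  fixes X :: "'a \<Rightarrow> bool"
  assumes "simple_function M X"
  shows "(\<Sum>u\<in>X ` space M. prob_value X u * of_bool u) = prob_value X True"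
proof (cases "True \<in> X ` space M")
  case True
  then have "(\<Sum>u\<in>X ` space M. prob_value X u * of_bool u) = (\<Sum>u\<in>{True}. prob_value X u * of_bool u)"
    by (intro sum.mono_neutral_right) auto
  then show ?thesis
    by simp
next
  case False
  then have "X -` {True} \<inter> space M = {}"
    by auto
  with False show ?thesis
    by (auto simp: prob_value_def intro!: sum.neutral)
qed

lemma simple_entropy_const: "simple_entropy (\<lambda>z. c) = 0"
proof -
  have "(\<lambda>z. c) ` space M = {c}" "(\<lambda>z. c) -` {c} \<inter> space M = space M"
    using not_empty by auto
  then show ?thesis
    by (simp add: simple_entropy_def prob_value_def prob_space)
qed

lemma simple_entropy_map_le:
  assumes "\<And>i. i \<in> set xs \<Longrightarrow> simple_function M (X i)"
  shows "simple_entropy (\<lambda>z. map (\<lambda>i. X i z) xs) \<le> (\<Sum>i\<leftarrow>xs. simple_entropy (X i))"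
  using assms
proof (induction xs)
  case Nil
  then show ?case
    by (simp add: simple_entropy_const)
next
  case (Cons a xs)
  have a: "simple_function M (X a)" and xs: "simple_function M (\<lambda>z. map (\<lambda>i. X i z) xs)"
    using Cons.prems by (auto intro: simple_function_map)
  have "simple_entropy (\<lambda>z. map (\<lambda>i. X i z) (a # xs)) \<le> simple_entropy (\<lambda>z. (X a z, map (\<lambda>i. X i z) xs))"
    using simple_entropy_comp_le[OF simple_function_Pair[OF a xs], of "\<lambda>(x, l). x # l"] by simp
  also have "\<dots> \<le> simple_entropy (X a) + simple_entropy (\<lambda>z. map (\<lambda>i. X i z) xs)"
    by (rule simple_entropy_pair_le[OF a xs])
  finally show ?case
    using Cons by simp
qed

end

section \<open>Invariant measures, recurrence and approximation\<close>

lemma measurable_funpow: "T \<in> M \<rightarrow>\<^sub>M M \<Longrightarrow> T ^^ n \<in> M \<rightarrow>\<^sub>M M"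
  by (induction n) (auto simp: measurable_ident_sets)

lemma invariant_measure_funpow:
  assumes "invariant_measure M T"
  shows "invariant_measure M (T ^^ n)"
proof (induction n)
  case 0
  show ?case
    by (simp add: invariant_measure_def id_def)
next
  case (Suc n)
  have T: "T \<in> M \<rightarrow>\<^sub>M M" and "distr M M T = M"
    using assms by (auto simp: invariant_measure_def)
  moreover have Tn: "T ^^ n \<in> M \<rightarrow>\<^sub>M M" and "distr M M (T ^^ n) = M"
    using Suc.IH by (auto simp: invariant_measure_def)
  ultimately have "distr M M (T ^^ n \<circ> T) = M"
    by (simp add: distr_distr[OF Tn T, symmetric])
  then show ?case
    using measurable_comp[OF T Tn] unfolding invariant_measure_def funpow_Suc_right by simp
qed

lemma measure_vimage_invariant:
  assumes "invariant_measure M T" "A \<in> sets M"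
  shows "measure M (T -` A \<inter> space M) = measure M A"
  using assms measure_distr[of T M M A] by (simp add: invariant_measure_def)

lemma ergodic_left_inverse:
  assumes erg: "ergodic M T" and S: "S \<in> M \<rightarrow>\<^sub>M M" and inv: "\<And>x. x \<in> space M \<Longrightarrow> S (T x) = x"
  shows "ergodic M S"
proof -
  have T: "T \<in> M \<rightarrow>\<^sub>M M" and distr_T: "distr M M T = M"
    using erg by (auto simp: ergodic_def invariant_measure_def)
  have vimage: "T -` (S -` A \<inter> space M) \<inter> space M = A \<inter> space M" for A
    using measurable_space[OF T] inv by auto
  have "distr M M S = M"
  proof (rule measure_eqI)
    fix A assume "A \<in> sets (distr M M S)"
    then have A: "A \<in> sets M" by simp
    have "emeasure (distr M M S) A = emeasure (distr M M T) (S -` A \<inter> space M)"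
      using S A by (simp add: emeasure_distr distr_T)
    also have "\<dots> = emeasure M (T -` (S -` A \<inter> space M) \<inter> space M)"
      using T S A by (intro emeasure_distr) (auto intro: measurable_sets)
    also have "\<dots> = emeasure M A"
      using A by (simp only: vimage sets.Int_space_eq2)
    finally show "emeasure (distr M M S) A = emeasure M A" .
  qed simp
  moreover have "T -` A \<inter> space M = A" if "A \<in> sets M" "S -` A \<inter> space M = A" for A
    using vimage[of A] that sets.sets_into_space[OF that(1)] by auto
  ultimately show ?thesis
    using S erg by (simp add: ergodic_def invariant_measure_def)
qed

lemma UN_funpow_vimage_Suc:
  assumes T: "T \<in> M \<rightarrow>\<^sub>M M"
  shows "(\<Union>t\<in>{Suc K..}. (T ^^ t) -` S \<inter> space M) = T -` (\<Union>t\<in>{K..}. (T ^^ t) -` S \<inter> space M) \<inter> space M"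
proof (intro equalityI subsetI)
  fix x assume "x \<in> (\<Union>t\<in>{Suc K..}. (T ^^ t) -` S \<inter> space M)"
  then obtain t where "Suc K \<le> t" "(T ^^ t) x \<in> S" "x \<in> space M"
    by auto
  moreover from \<open>Suc K \<le> t\<close> obtain t' where "t = Suc t'" "K \<le> t'"
    by (cases t) auto
  ultimately show "x \<in> T -` (\<Union>t\<in>{K..}. (T ^^ t) -` S \<inter> space M) \<inter> space M"
    using measurable_space[OF T] by (auto simp: funpow_Suc_right simp del: funpow.simps)
next
  fix x assume "x \<in> T -` (\<Union>t\<in>{K..}. (T ^^ t) -` S \<inter> space M) \<inter> space M"
  then obtain t where "K \<le> t" "(T ^^ t) (T x) \<in> S" "x \<in> space M"
    by auto
  then show "x \<in> (\<Union>t\<in>{Suc K..}. (T ^^ t) -` S \<inter> space M)"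
    by (intro UN_I[of "Suc t"]) (auto simp: funpow_Suc_right simp del: funpow.simps)
qed

context prob_space
begin

text \<open>The sets \<open>V K\<close> of points visiting \<open>S\<close> at some time \<open>t \<ge> K\<close> all have the measure of
  \<open>V 0 \<supseteq> S\<close>, so their intersection is an invariant set of positive, hence full, measure.\<close>

lemma ergodic_recurrence:
  assumes erg: "ergodic M T" and S: "S \<in> sets M" "measure M S > 0"
  shows "measure M (\<Union>t\<in>{K..}. (T ^^ t) -` S \<inter> space M) = 1"
proof -
  have T: "T \<in> M \<rightarrow>\<^sub>M M" and inv: "invariant_measure M T"
    using erg by (auto simp: ergodic_def invariant_measure_def)
  define V where "V K = (\<Union>t\<in>{K..}. (T ^^ t) -` S \<inter> space M)" for K
  have V_sets: "V K \<in> sets M" for K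
    unfolding V_def using measurable_sets[OF measurable_funpow[OF T] S(1)] by (intro sets.countable_UN) auto
  have V_Suc: "V (Suc K) = T -` V K \<inter> space M" for K
    unfolding V_def by (rule UN_funpow_vimage_Suc[OF T])
  have V_measure: "measure M (V K) = measure M (V 0)" for K
    by (induction K) (simp_all add: V_Suc measure_vimage_invariant[OF inv V_sets])
  have V_dec: "decseq V"
    unfolding V_def by (intro decseq_SucI UN_mono) auto
  define I where "I = (\<Inter>K. V K)"
  have I_sets: "I \<in> sets M"
    unfolding I_def using V_sets by auto
  have "(\<lambda>K. measure M (V K)) \<longlonglongrightarrow> measure M I"
    unfolding I_def using V_sets V_dec by (intro finite_Lim_measure_decseq) auto
  moreover have "(\<lambda>K. measure M (V K)) = (\<lambda>_. measure M (V 0))"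
    using V_measure by blast
  ultimately have I_measure: "measure M I = measure M (V 0)"
    by (metis LIMSEQ_const_iff)
  have "S \<subseteq> V 0"
    unfolding V_def using sets.sets_into_space[OF S(1)] by (auto intro: UN_I[of 0])
  then have "measure M I > 0"
    using S V_sets by (simp add: I_measure) (meson finite_measure_mono order.strict_trans2)
  moreover have "T -` I \<inter> space M = I"
  proof -
    have "T -` I \<inter> space M = (\<Inter>K. V (Suc K))"
      unfolding I_def V_Suc by auto
    also have "\<dots> = I"
      unfolding I_def using V_dec by (auto intro: decseq_SucD[THEN subsetD] dest: spec[of _ 0])
    finally show ?thesis .
  qed
  ultimately have "measure M I = 1"
    using erg I_sets unfolding ergodic_def by auto
  then have "measure M (V 0) = 1"
    by (simp add: I_measure)
  then show ?thesis
    using V_measure unfolding V_def by metis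
qed

lemma ergodic_recurrence_before:
  assumes "ergodic M T" "S \<in> sets M" "measure M S > 0" "\<eta> > 0"
  shows "\<exists>N. 1 - \<eta> < measure M (\<Union>t\<in>{K..N}. (T ^^ t) -` S \<inter> space M)"
proof -
  have T: "T \<in> M \<rightarrow>\<^sub>M M"
    using assms(1) by (simp add: ergodic_def invariant_measure_def)
  define A where "A N = (\<Union>t\<in>{K..N}. (T ^^ t) -` S \<inter> space M)" for N
  have "range A \<subseteq> sets M"
    unfolding A_def using measurable_sets[OF measurable_funpow[OF T] assms(2)] by (intro image_subsetI sets.countable_UN) auto
  moreover have "incseq A"
    unfolding A_def by (intro monoI UN_mono) auto
  moreover have "(\<Union>N. A N) = (\<Union>t\<in>{K..}. (T ^^ t) -` S \<inter> space M)"
    unfolding A_def by (auto intro: atLeastAtMost_iff[THEN iffD2, OF conjI, OF _ order_refl])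
  ultimately have "(\<lambda>N. measure M (A N)) \<longlonglongrightarrow> 1"
    using finite_Lim_measure_incseq[of A] ergodic_recurrence[OF assms(1-3)] by simp
  then have "\<forall>\<^sub>F N in sequentially. 1 - \<eta> < measure M (A N)"
    using assms(4) by (intro order_tendstoD(1)) auto
  then show ?thesis
    unfolding A_def eventually_sequentially by auto
qed

end

context finite_measure
begin

definition approximable :: "'a set set \<Rightarrow> 'a set \<Rightarrow> bool" where
  "approximable A S \<longleftrightarrow> (\<forall>e>0. \<exists>C\<in>A. measure M (S - C) + measure M (C - S) < e)"

lemma measure_Diff_UN_le:
  assumes "finite I" "\<And>i. i \<in> I \<Longrightarrow> A i \<in> sets M" "\<And>i. i \<in> I \<Longrightarrow> C i \<in> sets M"
  shows "measure M ((\<Union>i\<in>I. A i) - (\<Union>i\<in>I. C i)) \<le> (\<Sum>i\<in>I. measure M (A i - C i))"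
proof -
  have "measure M ((\<Union>i\<in>I. A i) - (\<Union>i\<in>I. C i)) \<le> measure M (\<Union>i\<in>I. A i - C i)"
    using assms by (intro finite_measure_mono sets.finite_UN) auto
  also have "\<dots> \<le> (\<Sum>i\<in>I. measure M (A i - C i))"
    using assms by (intro finite_measure_subadditive_finite) auto
  finally show ?thesis .
qed

lemma measure_UN_sym_diff_le:
  fixes e :: real
  assumes "finite P" "\<And>p. p \<in> P \<Longrightarrow> p \<in> sets M" "\<And>p. p \<in> P \<Longrightarrow> C p \<in> sets M"
    and "\<And>p. p \<in> P \<Longrightarrow> measure M (p - C p) + measure M (C p - p) \<le> e"
  shows "measure M (\<Union>p\<in>P. (p - C p) \<union> (C p - p)) \<le> card P * e"
proof -
  have "measure M (\<Union>p\<in>P. (p - C p) \<union> (C p - p)) \<le> (\<Sum>p\<in>P. measure M ((p - C p) \<union> (C p - p)))"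
    using assms by (intro finite_measure_subadditive_finite) auto
  also have "\<dots> \<le> (\<Sum>p\<in>P. e)"
    using assms by (intro sum_mono order.trans[OF measure_Un_le]) auto
  finally show ?thesis
    by simp
qed

lemma measure_UN_Diff_UN_lessThan:
  fixes a :: "nat \<Rightarrow> 'a set"
  assumes "range a \<subseteq> sets M" "e > 0"
  shows "\<exists>N. measure M ((\<Union>i. a i) - (\<Union>i<N. a i)) < e"
proof -
  define B where "B N = (\<Union>i<N. a i)" for N
  have U: "(\<Union>i. a i) \<in> sets M"
    using assms(1) by (rule sets.countable_UN)
  have B: "B N \<in> sets M" "B N \<subseteq> (\<Union>i. a i)" for N
    using assms(1) unfolding B_def by (auto intro!: sets.finite_UN)
  have "incseq B"
    unfolding B_def by (intro monoI UN_mono) auto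
  then have "(\<lambda>N. measure M (B N)) \<longlonglongrightarrow> measure M (\<Union>N. B N)"
    using B(1) by (intro finite_Lim_measure_incseq) auto
  moreover have "(\<Union>N. B N) = (\<Union>i. a i)"
    unfolding B_def using UN_UN_finite_eq[of a] by (simp add: atLeast0LessThan)
  ultimately have "\<forall>\<^sub>F N in sequentially. measure M (\<Union>i. a i) - e < measure M (B N)"
    using assms(2) by (intro order_tendstoD(1)) auto
  then obtain N where "measure M (\<Union>i. a i) - e < measure M (B N)"
    by (auto simp: eventually_sequentially)
  then have "measure M ((\<Union>i. a i) - B N) < e"
    using finite_measure_Diff[OF U B(1,2)] by simp
  then show ?thesis
    unfolding B_def by blast
qed

lemma approximable_Compl:
  assumes "algebra (space M) A" "A \<subseteq> sets M" "S \<in> sets M" "approximable A S"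
  shows "approximable A (space M - S)"
  unfolding approximable_def
proof (intro allI impI)
  interpret A: algebra "space M" A by (rule assms(1))
  fix e :: real assume "e > 0"
  then obtain C where C: "C \<in> A" "measure M (S - C) + measure M (C - S) < e"
    using assms(4) unfolding approximable_def by blast
  have "S \<subseteq> space M" "C \<subseteq> space M"
    using assms(2,3) C(1) by (auto dest: sets.sets_into_space)
  then have "(space M - S) - (space M - C) = C - S" "(space M - C) - (space M - S) = S - C"
    by auto
  then show "\<exists>C'\<in>A. measure M ((space M - S) - C') + measure M (C' - (space M - S)) < e"
    using C by (intro bexI[of _ "space M - C"]) auto
qed

lemma approximable_UN:
  fixes a :: "nat \<Rightarrow> 'a set"
  assumes A: "algebra (space M) A" "A \<subseteq> sets M"
    and a: "range a \<subseteq> sets M" "\<And>i. approximable A (a i)"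
  shows "approximable A (\<Union>i. a i)"
  unfolding approximable_def
proof (intro allI impI)
  interpret A: algebra "space M" A by (rule A(1))
  fix e :: real assume "e > 0"
  define U where "U = (\<Union>i. a i)"
  obtain N where tail: "measure M (U - (\<Union>i<N. a i)) < e / 2"
    using measure_UN_Diff_UN_lessThan[OF a(1), of "e / 2"] \<open>e > 0\<close> by (auto simp: U_def)
  define \<eta> where "\<eta> = e / (2 * (real N + 1))"
  have "\<eta> > 0"
    using \<open>e > 0\<close> by (simp add: \<eta>_def)
  then have "\<forall>i. \<exists>C\<in>A. measure M (a i - C) + measure M (C - a i) < \<eta>"
    using a(2) unfolding approximable_def by blast
  then obtain C where C: "\<And>i. C i \<in> A" "\<And>i. measure M (a i - C i) + measure M (C i - a i) < \<eta>"
    by metis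
  have sets: "a i \<in> sets M" "C i \<in> sets M" "U \<in> sets M" for i
    using a(1) C(1) A(2) by (auto simp: U_def)
  have "measure M (U - (\<Union>i<N. C i)) \<le> measure M ((U - (\<Union>i<N. a i)) \<union> ((\<Union>i<N. a i) - (\<Union>i<N. C i)))"
    using sets by (intro finite_measure_mono) (auto simp: U_def)
  also have "\<dots> \<le> measure M (U - (\<Union>i<N. a i)) + (\<Sum>i<N. measure M (a i - C i))"
    using sets by (intro order.trans[OF measure_Un_le] add_left_mono measure_Diff_UN_le) auto
  finally have left: "measure M (U - (\<Union>i<N. C i)) \<le> measure M (U - (\<Union>i<N. a i)) + (\<Sum>i<N. measure M (a i - C i))" .
  have "measure M ((\<Union>i<N. C i) - U) \<le> measure M ((\<Union>i<N. C i) - (\<Union>i<N. a i))"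
    using sets by (intro finite_measure_mono) (auto simp: U_def)
  also have "\<dots> \<le> (\<Sum>i<N. measure M (C i - a i))"
    using sets by (intro measure_Diff_UN_le) auto
  finally have right: "measure M ((\<Union>i<N. C i) - U) \<le> (\<Sum>i<N. measure M (C i - a i))" .
  have "(\<Sum>i<N. measure M (a i - C i)) + (\<Sum>i<N. measure M (C i - a i)) \<le> (\<Sum>i<N. \<eta>)"
    unfolding sum.distrib[symmetric] using C(2) by (intro sum_mono less_imp_le)
  also have "\<dots> \<le> e / 2"
    using \<open>e > 0\<close> by (simp add: \<eta>_def field_simps)
  finally show "\<exists>C'\<in>A. measure M ((\<Union>i. a i) - C') + measure M (C' - (\<Union>i. a i)) < e"
    using left right tail C(1) unfolding U_def
    by (intro bexI[of _ "\<Union>i<N. C i"]) auto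
qed

lemma approximable_sigma_sets:
  assumes A: "algebra (space M) A" "A \<subseteq> sets M"
    and G: "G \<subseteq> A" "sets M = sigma_sets (space M) G"
    and S: "S \<in> sets M"
  shows "approximable A S"
proof -
  interpret A: algebra "space M" A by (rule A(1))
  from S have "S \<in> sigma_sets (space M) G"
    by (simp add: G(2))
  then show ?thesis
  proof induction
    case (Basic a)
    then show ?case
      using G(1) unfolding approximable_def by (intro allI impI bexI[of _ a]) auto
  next
    case Empty
    then show ?case
      unfolding approximable_def by (intro allI impI bexI[of _ "{}"]) auto
  next
    case (Compl a)
    then show ?case
      using G(2) by (intro approximable_Compl A) auto
  next
    case (Union a)
    then show ?case
      using G(2) by (intro approximable_UN A) auto
  qed
qed

end

section \<open>Partitions, itineraries and entropy rate\<close>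

definition cell :: "'a set set \<Rightarrow> 'a \<Rightarrow> 'a set" where
  "cell P z = (THE p. p \<in> P \<and> z \<in> p)"

lemma ex1_cell:
  assumes "finite_meas_partition M P" "z \<in> space M"
  shows "\<exists>!p. p \<in> P \<and> z \<in> p"
proof -
  have "z \<in> \<Union>P"
    using assms unfolding finite_meas_partition_def by simp
  then obtain p where "p \<in> P" "z \<in> p"
    by blast
  moreover have "q = p" if "q \<in> P" "z \<in> q" for q
  proof (rule ccontr)
    assume "q \<noteq> p"
    then have "q \<inter> p = {}"
      using assms(1) that(1) \<open>p \<in> P\<close> unfolding finite_meas_partition_def by blast
    then show False
      using that(2) \<open>z \<in> p\<close> by blast
  qed
  ultimately show ?thesis
    by auto
qed

lemma
  assumes "finite_meas_partition M P" "z \<in> space M"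
  shows cell_in_partition: "cell P z \<in> P" and mem_cell: "z \<in> cell P z"
  using theI'[OF ex1_cell[OF assms]] unfolding cell_def by auto

lemma cell_eq_iff:
  assumes "finite_meas_partition M P" "z \<in> space M" "p \<in> P"
  shows "cell P z = p \<longleftrightarrow> z \<in> p"
  using ex1_cell[OF assms(1,2)] cell_in_partition[OF assms(1,2)] mem_cell[OF assms(1,2)] assms(3)
  by blast

lemma card_partition_pos:
  assumes "finite_meas_partition M P" "space M \<noteq> {}"
  shows "0 < card P"
  using assms by (auto simp: finite_meas_partition_def card_gt_0_iff)

lemma cell_eq_Eps:
  assumes P: "finite_meas_partition M P" and z: "z \<in> space M" and C: "\<forall>p\<in>P. z \<in> p \<longleftrightarrow> z \<in> C p"
  shows "cell P z = (SOME p. p \<in> P \<and> z \<in> C p)"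
proof -
  have "cell P z \<in> P \<and> z \<in> C (cell P z)"
    using cell_in_partition[OF P z] mem_cell[OF P z] C by blast
  moreover have "q = cell P z" if "q \<in> P \<and> z \<in> C q" for q
    using that C cell_eq_iff[OF P z, of q] by blast
  ultimately show ?thesis
    by (intro some_equality[symmetric]) blast+
qed

definition itinerary :: "('a \<Rightarrow> 'a) \<Rightarrow> 'a set set \<Rightarrow> nat \<Rightarrow> 'a \<Rightarrow> 'a set list" where
  "itinerary T P n z = map (\<lambda>i. cell P ((T ^^ i) z)) [0..<n]"

lemma simple_function_cell:
  assumes P: "finite_meas_partition M P"
  shows "simple_function M (cell P)"
proof -
  have "cell P ` space M \<subseteq> P"
    using cell_in_partition[OF P] by auto
  moreover have "cell P -` {p} \<inter> space M = p" if "p \<in> P" for p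
  proof (intro equalityI subsetI)
    fix z assume "z \<in> cell P -` {p} \<inter> space M"
    then show "z \<in> p"
      using cell_eq_iff[OF P _ that] by blast
  next
    fix z assume "z \<in> p"
    moreover have "p \<subseteq> space M"
      using P that unfolding finite_meas_partition_def by blast
    ultimately show "z \<in> cell P -` {p} \<inter> space M"
      using cell_eq_iff[OF P _ that] by blast
  qed
  ultimately show ?thesis
    using P unfolding simple_function_def finite_meas_partition_def
    by (metis (no_types, lifting) finite_subset image_subset_iff subset_iff)
qed

lemma simple_function_itinerary:
  assumes "finite_meas_partition M P" "T \<in> M \<rightarrow>\<^sub>M M"
  shows "simple_function M (itinerary T P n)"
proof -
  have "simple_function M (\<lambda>z. cell P ((T ^^ i) z))" for i
    using simple_function_comp[OF measurable_funpow[OF assms(2)] simple_function_cell[OF assms(1)]] .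
  then show ?thesis
    unfolding itinerary_def by (rule simple_function_map)
qed

lemma iter_join_eq_itinerary_fibers:
  assumes P: "finite_meas_partition M P" and T: "T \<in> M \<rightarrow>\<^sub>M M"
  shows "iter_join M T P n = (\<lambda>L. itinerary T P n -` {L} \<inter> space M) ` {L. set L \<subseteq> P \<and> length L = n}"
proof -
  define fiber where "fiber L = itinerary T P n -` {L} \<inter> space M" for L
  have T_space: "(T ^^ i) z \<in> space M" if "z \<in> space M" for i z
    using measurable_space[OF measurable_funpow[OF T]] that .
  have join_cell: "space M \<inter> (\<Inter>i<n. (T ^^ i) -` c i) = fiber (map c [0..<n])"
    if "\<forall>i<n. c i \<in> P" for c
    using that cell_eq_iff[OF P T_space]
    by (auto simp: fiber_def itinerary_def map_eq_conv)
  have "iter_join M T P n = fiber ` {L. set L \<subseteq> P \<and> length L = n}"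
  proof (intro equalityI subsetI)
    fix A assume "A \<in> iter_join M T P n"
    then obtain c where c: "\<forall>i<n. c i \<in> P" "A = space M \<inter> (\<Inter>i<n. (T ^^ i) -` c i)"
      unfolding iter_join_def by auto
    moreover have "map c [0..<n] \<in> {L. set L \<subseteq> P \<and> length L = n}"
      using c(1) by auto
    ultimately show "A \<in> fiber ` {L. set L \<subseteq> P \<and> length L = n}"
      using join_cell[OF c(1)] by auto
  next
    fix A assume "A \<in> fiber ` {L. set L \<subseteq> P \<and> length L = n}"
    then obtain L where L: "set L \<subseteq> P" "length L = n" "A = fiber L"
      by auto
    then have "map ((!) L) [0..<n] = L" "\<forall>i<n. L ! i \<in> P"
      by (auto simp: map_nth)
    then show "A \<in> iter_join M T P n"
      using join_cell[of "(!) L"] L(3) unfolding iter_join_def by (intro CollectI exI[of _ "(!) L"]) auto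
  qed
  then show ?thesis
    by (simp add: fiber_def[abs_def])
qed

lemma (in prob_space) partition_entropy_iter_join:
  assumes P: "finite_meas_partition M P" and T: "T \<in> M \<rightarrow>\<^sub>M M"
  shows "partition_entropy M (iter_join M T P n) = simple_entropy (itinerary T P n)"
proof -
  define W where "W = itinerary T P n"
  define fiber where "fiber L = W -` {L} \<inter> space M" for L
  define words where "words = {L. set L \<subseteq> P \<and> length L = n}"
  have "iter_join M T P n = fiber ` words"
    using iter_join_eq_itinerary_fibers[OF P T] by (simp add: fiber_def[abs_def] W_def words_def)
  moreover have "W ` space M \<subseteq> words"
    using cell_in_partition[OF P measurable_space[OF measurable_funpow[OF T]]]
    by (auto simp: words_def W_def itinerary_def)
  moreover have "finite words"
    unfolding words_def using P by (intro finite_lists_length_eq) (simp add: finite_meas_partition_def)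
  moreover have "\<forall>A\<in>fiber ` words - fiber ` W ` space M. measure M A * ln (measure M A) = 0"
  proof
    fix A assume "A \<in> fiber ` words - fiber ` W ` space M"
    then obtain L where "A = fiber L" "L \<notin> W ` space M"
      by blast
    then have "A = {}"
      unfolding fiber_def by blast
    then show "measure M A * ln (measure M A) = 0"
      by simp
  qed
  ultimately have "(\<Sum>A\<in>iter_join M T P n. measure M A * ln (measure M A)) =
      (\<Sum>A\<in>fiber ` W ` space M. measure M A * ln (measure M A))"
    by (intro sum.mono_neutral_right) auto
  also have "\<dots> = (\<Sum>L\<in>W ` space M. measure M (fiber L) * ln (measure M (fiber L)))"
    by (rule sum.reindex_cong[OF _ refl refl]) (auto simp: inj_on_def fiber_def)
  finally show ?thesis
    unfolding partition_entropy_def simple_entropy_def prob_value_def fiber_def W_def by simp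
qed

lemma partition_entropy_rate_eq_0:
  assumes nonneg: "\<And>n. 0 \<le> partition_entropy M (iter_join M T P n)"
    and sublinear: "\<And>\<epsilon>. \<epsilon> > 0 \<Longrightarrow>
      \<forall>\<^sub>F n in sequentially. partition_entropy M (iter_join M T P n) \<le> \<epsilon> * real n"
  shows "partition_entropy_rate M T P = 0"
proof -
  define X where "X n = partition_entropy M (iter_join M T P (Suc n)) / real (Suc n)" for n
  have "X \<longlonglongrightarrow> 0"
  proof (rule LIMSEQ_I)
    fix \<epsilon> :: real assume "\<epsilon> > 0"
    then obtain N where N: "\<And>n. n \<ge> N \<Longrightarrow> partition_entropy M (iter_join M T P n) \<le> \<epsilon> / 2 * real n"
      using sublinear[of "\<epsilon> / 2"] by (auto simp: eventually_sequentially)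
    have "norm (X n - 0) < \<epsilon>" if "n \<ge> N" for n
    proof -
      have "X n \<le> \<epsilon> / 2"
        using N[of "Suc n"] that by (simp add: X_def divide_le_eq)
      moreover have "0 \<le> X n"
        using nonneg[of "Suc n"] by (simp add: X_def)
      ultimately show ?thesis
        using \<open>\<epsilon> > 0\<close> by simp
    qed
    then show "\<exists>N. \<forall>n\<ge>N. norm (X n - 0) < \<epsilon>"
      by blast
  qed
  then show ?thesis
    unfolding partition_entropy_rate_def X_def[symmetric] by (rule limI)
qed

lemma ks_entropy_eq_0:
  assumes "\<And>P. finite_meas_partition M P \<Longrightarrow> partition_entropy_rate M T P = 0"
  shows "ks_entropy M T = 0"
proof -
  have "finite_meas_partition M {space M}"
    by (simp add: finite_meas_partition_def)
  then have nonempty: "{P. finite_meas_partition M P} \<noteq> {}"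
    by blast
  have "ks_entropy M T = (SUP P\<in>{P. finite_meas_partition M P}. ereal 0)"
    unfolding ks_entropy_def using assms by (intro SUP_cong) auto
  also have "\<dots> = 0"
    using nonempty by (simp add: zero_ereal_def)
  finally show ?thesis .
qed

section \<open>Locality and walls of cellular automata\<close>

definition shift_by :: "int \<Rightarrow> (int \<Rightarrow> 'a) \<Rightarrow> (int \<Rightarrow> 'a)" where
  "shift_by a z = (\<lambda>i. z (i + a))"

lemma funpow_shift: "shift ^^ t = shift_by (int t)"
  by (induction t) (auto simp: shift_def shift_by_def fun_eq_iff algebra_simps)

lemma funpow_shift_by: "shift_by a ^^ t = shift_by (int t * a)"
  by (induction t) (auto simp: shift_by_def fun_eq_iff algebra_simps)

lemma shift_by_minus_one_shift: "shift_by (-1) (shift z) = z"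
  by (simp add: shift_def shift_by_def)

lemma map_plus_upto: "map (\<lambda>j. j + a) [p..q] = [p + a..q + a]"
  by (rule nth_equalityI) auto

lemma cellular_automaton_local:
  assumes "cellular_automaton F r" and "\<And>j. \<bar>j - p\<bar> \<le> int r \<Longrightarrow> x j = y j"
  shows "F x p = F y p"
proof -
  obtain f where f: "\<And>x i. F x i = f (map x [i - int r .. i + int r])"
    using assms(1) unfolding cellular_automaton_def by blast
  have "map x [p - int r .. p + int r] = map y [p - int r .. p + int r]"
    using assms(2) by (intro map_eq_conv[THEN iffD2]) auto
  then show ?thesis
    by (simp only: f)
qed

lemma cellular_automaton_shift_by:
  assumes "cellular_automaton F r"
  shows "F (shift_by a z) = shift_by a (F z)"
proof -
  obtain f where f: "\<And>x i. F x i = f (map x [i - int r .. i + int r])"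
    using assms(1) unfolding cellular_automaton_def by blast
  have "map (\<lambda>j. z (j + a)) [p..q] = map z [p + a..q + a]" for p q
    using map_map[of z "\<lambda>j. j + a" "[p..q]"] by (simp add: map_plus_upto comp_def)
  then show ?thesis
    unfolding shift_by_def by (intro ext) (simp add: f algebra_simps)
qed

lemma funpow_cellular_automaton_shift_by:
  assumes "cellular_automaton F r"
  shows "(F ^^ i) (shift_by a z) = shift_by a ((F ^^ i) z)"
  by (induction i) (simp_all add: cellular_automaton_shift_by[OF assms])

lemma cantor_dist_less_imp_eq:
  assumes "cantor_dist x y < 2 powr (- real n)" and "\<bar>j\<bar> \<le> int n"
  shows "x j = y j"
proof (rule ccontr)
  assume "x j \<noteq> y j"
  then have "(LEAST k::nat. \<exists>j. nat \<bar>j\<bar> = k \<and> x j \<noteq> y j) \<le> n"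
    using assms(2) by (intro Least_le[THEN order.trans]) auto
  then have "2 powr (- real n) \<le> cantor_dist x y"
    using \<open>x j \<noteq> y j\<close> unfolding cantor_dist_def by (auto intro: powr_mono)
  then show False
    using assms(1) by simp
qed

definition wall :: "((int \<Rightarrow> 'a) \<Rightarrow> (int \<Rightarrow> 'a)) \<Rightarrow> nat \<Rightarrow> (int \<Rightarrow> 'a) \<Rightarrow> int \<Rightarrow> (int \<Rightarrow> 'a) set" where
  "wall F r x0 a = {z. \<forall>i j. \<bar>j\<bar> \<le> int r \<longrightarrow> (F ^^ i) z (a + j) = (F ^^ i) x0 j}"

lemma Bball_subset_wall: "Bball F r x0 \<subseteq> wall F r x0 0"
proof
  fix y assume "y \<in> Bball F r x0"
  then have "(F ^^ i) x0 j = (F ^^ i) y j" if "\<bar>j\<bar> \<le> int r" for i j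
    using that unfolding Bball_def by (blast intro: cantor_dist_less_imp_eq)
  then show "y \<in> wall F r x0 0"
    unfolding wall_def by simp
qed

lemma mem_wall_iff_shift_by:
  assumes "cellular_automaton F r"
  shows "z \<in> wall F r x0 a \<longleftrightarrow> shift_by a z \<in> wall F r x0 0"
proof -
  have "(F ^^ i) (shift_by a z) j = (F ^^ i) z (a + j)" for i j
    unfolding funpow_cellular_automaton_shift_by[OF assms] by (simp add: shift_by_def add.commute)
  then show ?thesis
    unfolding wall_def by simp
qed

lemma funpow_eq_on_wall:
  assumes "z \<in> wall F r x0 a" "z' \<in> wall F r x0 a" "\<bar>p - a\<bar> \<le> int r"
  shows "(F ^^ i) z p = (F ^^ i) z' p"
proof -
  have "(F ^^ i) z (a + (p - a)) = (F ^^ i) x0 (p - a)" "(F ^^ i) z' (a + (p - a)) = (F ^^ i) x0 (p - a)"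
    using assms unfolding wall_def by blast+
  then show ?thesis
    by simp
qed

lemma funpow_eq_between_walls:
  assumes ca: "cellular_automaton F r"
    and walls: "z \<in> wall F r x0 a" "z \<in> wall F r x0 b" "z' \<in> wall F r x0 a" "z' \<in> wall F r x0 b"
    and agree: "\<And>p. a - int r \<le> p \<Longrightarrow> p \<le> b + int r \<Longrightarrow> z p = z' p"
  shows "a - int r \<le> p \<Longrightarrow> p \<le> b + int r \<Longrightarrow> (F ^^ i) z p = (F ^^ i) z' p"
proof (induction i arbitrary: p)
  case 0
  then show ?case using agree by simp
next
  case (Suc i)
  show ?case
  proof (cases "\<bar>p - a\<bar> \<le> int r \<or> \<bar>p - b\<bar> \<le> int r")
    case True
    then show ?thesis
      using funpow_eq_on_wall[OF walls(1,3)] funpow_eq_on_wall[OF walls(2,4)] by blast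
  next
    case False
    then have "a + int r < p" "p < b - int r"
      using Suc.prems by auto
    then have "F ((F ^^ i) z) p = F ((F ^^ i) z') p"
      by (intro cellular_automaton_local[OF ca] Suc.IH) auto
    then show ?thesis
      by simp
  qed
qed

definition depends_on_window :: "nat \<Rightarrow> ((int \<Rightarrow> 'a) \<Rightarrow> 'b) \<Rightarrow> bool" where
  "depends_on_window k f \<longleftrightarrow> (\<forall>x y. (\<forall>j. \<bar>j\<bar> \<le> int k \<longrightarrow> x j = y j) \<longrightarrow> f x = f y)"

lemma depends_on_window_mono: "depends_on_window k f \<Longrightarrow> k \<le> k' \<Longrightarrow> depends_on_window k' f"
  unfolding depends_on_window_def by (meson of_nat_le_iff order_trans)

lemma depends_on_window_prod_emb:
  assumes "finite J"
  shows "\<exists>k. depends_on_window k (\<lambda>z. z \<in> prod_emb UNIV (\<lambda>_. count_space UNIV) J X)"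
proof
  define k where "k = Max (insert 0 ((\<lambda>j. nat \<bar>j\<bar>) ` J))"
  have bound: "\<bar>j\<bar> \<le> int k" if "j \<in> J" for j
  proof -
    have "nat \<bar>j\<bar> \<le> k"
      unfolding k_def using assms that by (intro Max_ge) auto
    then show ?thesis
      by (simp add: nat_le_iff)
  qed
  show "depends_on_window k (\<lambda>z. z \<in> prod_emb UNIV (\<lambda>_. count_space UNIV) J X)"
    unfolding depends_on_window_def
  proof (intro allI impI)
    fix x y :: "int \<Rightarrow> 'a" assume "\<forall>j. \<bar>j\<bar> \<le> int k \<longrightarrow> x j = y j"
    then have "restrict x J = restrict y J"
      using bound by (auto simp: restrict_def)
    then show "(x \<in> prod_emb UNIV (\<lambda>_. count_space UNIV) J X) = (y \<in> prod_emb UNIV (\<lambda>_. count_space UNIV) J X)"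
      unfolding prod_emb_iff by simp
  qed
qed

lemma depends_on_window_Eps:
  fixes C :: "'p \<Rightarrow> (int \<Rightarrow> 'a) set"
  assumes "\<And>p. p \<in> P \<Longrightarrow> depends_on_window k (\<lambda>z. z \<in> C p)"
  shows "depends_on_window k (\<lambda>z. SOME p. p \<in> P \<and> z \<in> C p)"
  unfolding depends_on_window_def
proof (intro allI impI)
  fix x y :: "int \<Rightarrow> 'a" assume "\<forall>j. \<bar>j\<bar> \<le> int k \<longrightarrow> x j = y j"
  then have "(\<lambda>p. p \<in> P \<and> x \<in> C p) = (\<lambda>p. p \<in> P \<and> y \<in> C p)"
    using assms unfolding depends_on_window_def by blast
  then show "(SOME p. p \<in> P \<and> x \<in> C p) = (SOME p. p \<in> P \<and> y \<in> C p)"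
    by simp
qed

definition walled :: "((int \<Rightarrow> 'a) \<Rightarrow> (int \<Rightarrow> 'a)) \<Rightarrow> nat \<Rightarrow> (int \<Rightarrow> 'a) \<Rightarrow> nat \<Rightarrow> nat \<Rightarrow> (int \<Rightarrow> 'a) set" where
  "walled F r x0 k m = {z. \<exists>a\<in>{k..m}. \<exists>b\<in>{k..m}. z \<in> wall F r x0 (- int a) \<and> z \<in> wall F r x0 (int b)}"

section \<open>Measures on the full shift\<close>

locale ca_measure =
  fixes F :: "(int \<Rightarrow> 'a::finite) \<Rightarrow> (int \<Rightarrow> 'a)" and r :: nat and \<mu> :: "(int \<Rightarrow> 'a) measure"
  assumes ca: "cellular_automaton F r"
    and prob: "prob_space \<mu>"
    and sets_eq: "sets \<mu> = sets full_shift_space"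
    and erg: "ergodic \<mu> shift"
    and inv: "invariant_measure \<mu> F"
begin

sublocale prob_space \<mu>
  by (rule prob)

lemma space_eq [simp]: "space \<mu> = UNIV"
proof -
  have "space full_shift_space = UNIV"
    unfolding full_shift_space_def space_PiM by (auto simp: PiE_def extensional_def)
  then show ?thesis
    using sets_eq_imp_space_eq[OF sets_eq] by simp
qed

lemma UNIV_Diff_sets [intro]:
  assumes "C \<in> sets \<mu>"
  shows "UNIV - C \<in> sets \<mu>"
proof -
  have "space \<mu> - C \<in> sets \<mu>"
    using assms by (rule sets.compl_sets)
  then show ?thesis
    by simp
qed

lemma sets_eq_sigma: "sets \<mu> = sigma_sets UNIV (prod_algebra UNIV (\<lambda>_::int. count_space (UNIV :: 'a set)))"
  using sets_eq space_eq unfolding full_shift_space_def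
  by (simp add: sets_PiM space_PiM PiE_UNIV_domain)

lemma measurable_eq: "\<mu> \<rightarrow>\<^sub>M \<mu> = full_shift_space \<rightarrow>\<^sub>M full_shift_space"
  by (rule measurable_cong_sets[OF sets_eq sets_eq])

lemma measurable_F: "F \<in> \<mu> \<rightarrow>\<^sub>M \<mu>"
  using inv by (simp add: invariant_measure_def)

lemma measurable_shift_by: "shift_by a \<in> \<mu> \<rightarrow>\<^sub>M \<mu>"
proof -
  have "(\<lambda>z i. z (i + a)) \<in> full_shift_space \<rightarrow>\<^sub>M full_shift_space"
    unfolding full_shift_space_def
    by (rule measurable_PiM_single') (auto simp: space_PiM PiE_def extensional_def)
  then show ?thesis
    unfolding measurable_eq shift_by_def .
qed

lemma ergodic_shift_by_minus_one: "ergodic \<mu> (shift_by (-1))"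
  using erg measurable_shift_by by (rule ergodic_left_inverse) (simp add: shift_by_minus_one_shift)

lemma funpow_coordinate_sets: "{z. (F ^^ i) z j = c} \<in> sets \<mu>"
proof -
  have "(\<lambda>z. z j) \<in> full_shift_space \<rightarrow>\<^sub>M count_space UNIV"
    unfolding full_shift_space_def by (rule measurable_component_singleton) simp
  then have "(\<lambda>z. z j) \<in> \<mu> \<rightarrow>\<^sub>M count_space UNIV"
    using measurable_cong_sets[OF sets_eq refl] by blast
  from measurable_sets[OF measurable_comp[OF measurable_funpow[OF measurable_F] this], of "{c}"]
  show ?thesis
    by (simp add: vimage_def)
qed

lemma wall_sets: "wall F r x0 a \<in> sets \<mu>"
proof -
  have "wall F r x0 a = (\<Inter>i. \<Inter>j\<in>{j. \<bar>j\<bar> \<le> int r}. {z. (F ^^ i) z (a + j) = (F ^^ i) x0 j})"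
    unfolding wall_def by auto
  also have "\<dots> \<in> sets \<mu>"
  proof (intro sets.countable_INT image_subsetI)
    show "{j::int. \<bar>j\<bar> \<le> int r} \<noteq> {}"
      by (metis abs_zero mem_Collect_eq of_nat_0_le_iff empty_iff)
  qed (auto intro: funpow_coordinate_sets)
  finally show ?thesis .
qed

lemma walled_sets: "walled F r x0 k m \<in> sets \<mu>"
proof -
  have "walled F r x0 k m = (\<Union>a\<in>{k..m}. \<Union>b\<in>{k..m}. wall F r x0 (- int a) \<inter> wall F r x0 (int b))"
    unfolding walled_def by auto
  then show ?thesis
    using wall_sets by simp
qed

lemma algebra_window_sets: "algebra UNIV {C \<in> sets \<mu>. \<exists>k. depends_on_window k (\<lambda>z. z \<in> C)}"
  unfolding algebra_iff_Un
proof (intro conjI ballI)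
  show "{} \<in> {C \<in> sets \<mu>. \<exists>k. depends_on_window k (\<lambda>z. z \<in> C)}"
    by (auto simp: depends_on_window_def)
next
  fix C assume "C \<in> {C \<in> sets \<mu>. \<exists>k. depends_on_window k (\<lambda>z. z \<in> C)}"
  then show "UNIV - C \<in> {C \<in> sets \<mu>. \<exists>k. depends_on_window k (\<lambda>z. z \<in> C)}"
    unfolding depends_on_window_def by auto
next
  fix C C' assume "C \<in> {C \<in> sets \<mu>. \<exists>k. depends_on_window k (\<lambda>z. z \<in> C)}"
    "C' \<in> {C \<in> sets \<mu>. \<exists>k. depends_on_window k (\<lambda>z. z \<in> C)}"
  then obtain k k' where "depends_on_window k (\<lambda>z. z \<in> C)" "depends_on_window k' (\<lambda>z. z \<in> C')"
    "C \<in> sets \<mu>" "C' \<in> sets \<mu>"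
    by auto
  then have "depends_on_window (max k k') (\<lambda>z. z \<in> C)" "depends_on_window (max k k') (\<lambda>z. z \<in> C')"
    by (auto intro: depends_on_window_mono)
  then show "C \<union> C' \<in> {C \<in> sets \<mu>. \<exists>k. depends_on_window k (\<lambda>z. z \<in> C)}"
    using \<open>C \<in> sets \<mu>\<close> \<open>C' \<in> sets \<mu>\<close> unfolding depends_on_window_def by blast
qed auto

lemma approx_by_window_set:
  assumes "S \<in> sets \<mu>" "e > 0"
  shows "\<exists>k C. C \<in> sets \<mu> \<and> depends_on_window k (\<lambda>z. z \<in> C) \<and> measure \<mu> (S - C) + measure \<mu> (C - S) < e"
proof -
  define A where "A = {C \<in> sets \<mu>. \<exists>k. depends_on_window k (\<lambda>z. z \<in> C)}"
  define G where "G = prod_algebra UNIV (\<lambda>_::int. count_space (UNIV :: 'a set))"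
  have "G \<subseteq> A"
  proof
    fix X assume "X \<in> G"
    then obtain J E where "X = prod_emb UNIV (\<lambda>_. count_space UNIV) J (\<Pi>\<^sub>E j\<in>J. E j)" "finite J"
      unfolding G_def by (elim prod_algebraE)
    moreover have "X \<in> sets \<mu>"
      using \<open>X \<in> G\<close> sets_eq_sigma by (auto simp: G_def)
    ultimately show "X \<in> A"
      using depends_on_window_prod_emb by (auto simp: A_def)
  qed
  moreover have "A \<subseteq> sets \<mu>"
    by (auto simp: A_def)
  ultimately have "approximable A S"
    using assms(1) algebra_window_sets sets_eq_sigma
    by (intro approximable_sigma_sets) (simp_all add: A_def G_def)
  then obtain C where "C \<in> A" "measure \<mu> (S - C) + measure \<mu> (C - S) < e"
    using assms(2) unfolding approximable_def by blast
  then show ?thesis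
    by (auto simp: A_def)
qed

lemma partition_local_approx:
  assumes P: "finite_meas_partition \<mu> P" and \<delta>: "\<delta> > 0"
  obtains D k \<psi> where "D \<in> sets \<mu>" "measure \<mu> D \<le> \<delta>"
    "depends_on_window k \<psi>"
    "\<And>z. z \<notin> D \<Longrightarrow> cell P z = \<psi> z"
proof -
  have fin: "finite P" and P_sets: "P \<subseteq> sets \<mu>"
    using P by (auto simp: finite_meas_partition_def)
  have "card P > 0"
    using card_partition_pos[OF P] by simp
  then have "\<forall>p\<in>P. \<exists>k C. C \<in> sets \<mu> \<and> depends_on_window k (\<lambda>z. z \<in> C) \<and> measure \<mu> (p - C) + measure \<mu> (C - p) < \<delta> / card P"
    using P_sets \<delta> by (intro ballI approx_by_window_set) auto
  then obtain kp C where C: "\<And>p. p \<in> P \<Longrightarrow> C p \<in> sets \<mu> \<and> depends_on_window (kp p) (\<lambda>z. z \<in> C p) \<and>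
      measure \<mu> (p - C p) + measure \<mu> (C p - p) < \<delta> / card P"
    by metis
  define k where "k = Max (kp ` P)"
  define D where "D = (\<Union>p\<in>P. (p - C p) \<union> (C p - p))"
  define \<psi> where "\<psi> z = (SOME p. p \<in> P \<and> z \<in> C p)" for z
  have C_window: "depends_on_window k (\<lambda>z. z \<in> C p)" if "p \<in> P" for p
    using C[OF that] fin that by (auto simp: k_def intro: depends_on_window_mono)
  show ?thesis
  proof
    show "D \<in> sets \<mu>"
      unfolding D_def using C P_sets fin by (intro sets.finite_UN) auto
    have "measure \<mu> (p - C p) + measure \<mu> (C p - p) \<le> \<delta> / card P" if "p \<in> P" for p
      using C[OF that] by simp
    then have "measure \<mu> D \<le> card P * (\<delta> / card P)"
      unfolding D_def using C P_sets fin by (intro measure_UN_sym_diff_le) auto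
    then show "measure \<mu> D \<le> \<delta>"
      using \<open>card P > 0\<close> by simp
    show "depends_on_window k \<psi>"
      unfolding \<psi>_def[abs_def] using C_window by (rule depends_on_window_Eps)
  next
    fix z assume "z \<notin> D"
    then have "\<forall>p\<in>P. z \<in> p \<longleftrightarrow> z \<in> C p"
      unfolding D_def by blast
    then show "cell P z = \<psi> z"
      unfolding \<psi>_def by (intro cell_eq_Eps[OF P]) auto
  qed
qed

lemma measure_walled:
  assumes "measure \<mu> (wall F r x0 0) > 0" "\<delta> > 0"
  obtains m where "measure \<mu> (UNIV - walled F r x0 k m) \<le> \<delta>"
proof -
  have right: "(shift ^^ t) -` wall F r x0 0 = wall F r x0 (int t)" for t
    using mem_wall_iff_shift_by[OF ca] by (auto simp: funpow_shift)
  have left: "(shift_by (-1) ^^ t) -` wall F r x0 0 = wall F r x0 (- int t)" for t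
    using mem_wall_iff_shift_by[OF ca] by (auto simp: funpow_shift_by)
  obtain N1 where N1: "1 - \<delta> / 2 < measure \<mu> (\<Union>t\<in>{k..N1}. wall F r x0 (int t))"
    using ergodic_recurrence_before[OF erg wall_sets assms(1), of "\<delta> / 2" k] assms(2)
    by (auto simp: right)
  obtain N2 where N2: "1 - \<delta> / 2 < measure \<mu> (\<Union>t\<in>{k..N2}. wall F r x0 (- int t))"
    using ergodic_recurrence_before[OF ergodic_shift_by_minus_one wall_sets assms(1), of "\<delta> / 2" k] assms(2)
    by (auto simp: left)
  define R where "R = (\<Union>t\<in>{k..N1}. wall F r x0 (int t))"
  define L where "L = (\<Union>t\<in>{k..N2}. wall F r x0 (- int t))"
  have R: "R \<in> sets \<mu>" and L: "L \<in> sets \<mu>"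
    using wall_sets by (auto simp: R_def L_def)
  have "L \<inter> R \<subseteq> walled F r x0 k (max N1 N2)"
    unfolding walled_def L_def R_def by force
  then have "measure \<mu> (UNIV - walled F r x0 k (max N1 N2)) \<le> measure \<mu> ((UNIV - L) \<union> (UNIV - R))"
    using L R walled_sets by (intro finite_measure_mono) auto
  also have "\<dots> \<le> measure \<mu> (UNIV - L) + measure \<mu> (UNIV - R)"
    using L R by (intro measure_Un_le) auto
  also have "\<dots> \<le> \<delta>"
    using prob_compl[OF L] prob_compl[OF R] N1 N2 by (simp add: R_def L_def)
  finally show ?thesis
    by (rule that)
qed

lemma simple_function_coordinate: "simple_function \<mu> (\<lambda>z. z j)"
  unfolding simple_function_def using funpow_coordinate_sets[of 0] by (simp add: vimage_def)

end

section \<open>Coding itineraries between walls\<close>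

text \<open>The code of \<open>z\<close> records which positions in \<open>[-m, m]\<close> carry walls and the content of
  \<open>z\<close> on \<open>[-m - r, m + r]\<close> (finitely many possibilities), together with the times \<open>i < n\<close>
  at which the cell of \<open>F\<^sup>i z\<close> may not be determined by these data.\<close>

locale itinerary_code = ca_measure F r \<mu>
  for F :: "(int \<Rightarrow> 'a::finite) \<Rightarrow> (int \<Rightarrow> 'a)" and r \<mu> +
  fixes P :: "(int \<Rightarrow> 'a) set set" and \<delta> :: real and D :: "(int \<Rightarrow> 'a) set"
    and \<psi> :: "(int \<Rightarrow> 'a) \<Rightarrow> (int \<Rightarrow> 'a) set" and k :: nat and x0 :: "int \<Rightarrow> 'a" and m :: nat
  assumes partition: "finite_meas_partition \<mu> P"
    and D_sets: "D \<in> sets \<mu>" and D_measure: "measure \<mu> D \<le> \<delta>"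
    and \<psi>_local: "depends_on_window k \<psi>"
    and cell_eq_\<psi>: "\<And>z. z \<notin> D \<Longrightarrow> cell P z = \<psi> z"
    and walled_measure: "measure \<mu> (UNIV - walled F r x0 k m) \<le> \<delta>"
begin

definition window_code :: "(int \<Rightarrow> 'a) \<Rightarrow> bool list \<times> 'a list" where
  "window_code z = (map (\<lambda>a. z \<in> wall F r x0 a) [- int m..int m], map z [- int m - int r..int m + int r])"

definition unreliable :: "nat \<Rightarrow> (int \<Rightarrow> 'a) \<Rightarrow> bool" where
  "unreliable i z \<longleftrightarrow> (F ^^ i) z \<in> D \<or> z \<notin> walled F r x0 k m"

definition code :: "nat \<Rightarrow> (int \<Rightarrow> 'a) \<Rightarrow> (bool list \<times> 'a list) \<times> bool list" where
  "code n z = (window_code z, map (\<lambda>i. unreliable i z) [0..<n])"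

lemma simple_function_window_code: "simple_function \<mu> window_code"
  unfolding window_code_def
  by (intro simple_function_Pair simple_function_map simple_function_mem wall_sets simple_function_coordinate)

lemma simple_function_unreliable: "simple_function \<mu> (unreliable i)"
proof -
  have "simple_function \<mu> (\<lambda>z. (F ^^ i) z \<in> D)"
    using simple_function_comp[OF measurable_funpow[OF measurable_F] simple_function_mem[OF D_sets]] .
  moreover have "simple_function \<mu> (\<lambda>z. z \<in> walled F r x0 k m)"
    using simple_function_mem[OF walled_sets] .
  ultimately show ?thesis
    unfolding unreliable_def[abs_def] by (rule simple_function_compose2)
qed

lemma simple_function_code: "simple_function \<mu> (code n)"
  unfolding code_def[abs_def]
  by (intro simple_function_Pair simple_function_map simple_function_window_code simple_function_unreliable)

lemma prob_unreliable: "prob_value (unreliable i) True \<le> 2 * \<delta>"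
proof -
  have D': "(F ^^ i) -` D \<in> sets \<mu>"
    using measurable_sets[OF measurable_funpow[OF measurable_F] D_sets, of i] by simp
  have "unreliable i -` {True} \<inter> space \<mu> = (F ^^ i) -` D \<union> (UNIV - walled F r x0 k m)"
    unfolding unreliable_def space_eq by blast
  then have "prob_value (unreliable i) True = measure \<mu> ((F ^^ i) -` D \<union> (UNIV - walled F r x0 k m))"
    by (simp only: prob_value_def)
  also have "\<dots> \<le> measure \<mu> ((F ^^ i) -` D) + measure \<mu> (UNIV - walled F r x0 k m)"
    by (rule measure_Un_le[OF D' UNIV_Diff_sets[OF walled_sets]])
  also have "measure \<mu> ((F ^^ i) -` D) = measure \<mu> D"
    using measure_vimage_invariant[OF invariant_measure_funpow[OF inv] D_sets, of i] by simp
  finally show ?thesis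
    using D_measure walled_measure by simp
qed

lemma itinerary_nth_eq_of_code_eq:
  assumes code: "code n z = code n z'" and i: "i < n" "\<not> unreliable i z"
  shows "itinerary F P n z ! i = itinerary F P n z' ! i"
proof -
  have window: "window_code z = window_code z'" and "unreliable i z' = unreliable i z"
    using code i(1) unfolding code_def by (auto simp: map_eq_conv)
  then have reliable: "(F ^^ i) z \<notin> D" "(F ^^ i) z' \<notin> D" "z \<in> walled F r x0 k m"
    using i(2) by (auto simp: unreliable_def)
  then obtain a b where ab: "a \<in> {k..m}" "b \<in> {k..m}" and walls: "z \<in> wall F r x0 (- int a)" "z \<in> wall F r x0 (int b)"
    unfolding walled_def by blast
  have same_walls: "z \<in> wall F r x0 c \<longleftrightarrow> z' \<in> wall F r x0 c" if "- int m \<le> c" "c \<le> int m" for c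
    using window that unfolding window_code_def by (auto simp: map_eq_conv)
  have agree: "z p = z' p" if "- int m - int r \<le> p" "p \<le> int m + int r" for p
    using window that unfolding window_code_def by (auto simp: map_eq_conv)
  have "(F ^^ i) z j = (F ^^ i) z' j" if "\<bar>j\<bar> \<le> int k" for j
    using ab that
    by (intro funpow_eq_between_walls[OF ca walls] agree) (auto simp: same_walls[symmetric] walls)
  then have "\<psi> ((F ^^ i) z) = \<psi> ((F ^^ i) z')"
    using \<psi>_local unfolding depends_on_window_def by blast
  then show ?thesis
    using reliable i(1) by (simp add: cell_eq_\<psi> itinerary_def)
qed

lemma inj_on_restrict_itinerary_fiber:
  "inj_on (\<lambda>L. restrict ((!) L) {i. i < n \<and> snd c ! i}) (itinerary F P n ` (code n -` {c}))"
proof (rule inj_onI)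
  fix L L' assume "L \<in> itinerary F P n ` (code n -` {c})" "L' \<in> itinerary F P n ` (code n -` {c})"
    and eq: "restrict ((!) L) {i. i < n \<and> snd c ! i} = restrict ((!) L') {i. i < n \<and> snd c ! i}"
  then obtain z z' where z: "code n z = c" "L = itinerary F P n z"
    and z': "code n z' = c" "L' = itinerary F P n z'"
    by blast
  have "L ! i = L' ! i" if "i < n" for i
  proof (cases "snd c ! i")
    case True
    then show ?thesis
      using fun_cong[OF eq, of i] that by simp
  next
    case False
    then have "\<not> unreliable i z"
      using z(1) that by (auto simp: code_def)
    then show ?thesis
      using itinerary_nth_eq_of_code_eq[of n z z' i] z z' that by simp
  qed
  then show "L = L'"
    using z z' by (intro nth_equalityI) (auto simp: itinerary_def)
qed

lemma card_itinerary_fiber: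
  "card (itinerary F P n ` (code n -` {c})) \<le> card P ^ card {i. i < n \<and> snd c ! i}"
proof -
  define B where "B = {i. i < n \<and> snd c ! i}"
  have fin: "finite P" "finite B"
    using partition by (auto simp: finite_meas_partition_def B_def)
  have "(\<lambda>L. restrict ((!) L) B) ` itinerary F P n ` (code n -` {c}) \<subseteq> (\<Pi>\<^sub>E i\<in>B. P)"
  proof
    fix X assume "X \<in> (\<lambda>L. restrict ((!) L) B) ` itinerary F P n ` (code n -` {c})"
    then obtain z where X: "X = restrict ((!) (itinerary F P n z)) B"
      by blast
    have "itinerary F P n z ! i \<in> P" if "i \<in> B" for i
      using that cell_in_partition[OF partition] by (simp add: B_def itinerary_def)
    then show "X \<in> (\<Pi>\<^sub>E i\<in>B. P)"
      unfolding X by (simp add: restrict_PiE_iff)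
  qed
  then have "card (itinerary F P n ` (code n -` {c})) \<le> card (\<Pi>\<^sub>E i\<in>B. P)"
    using inj_on_restrict_itinerary_fiber fin by (intro card_inj_on_le) (auto simp: B_def finite_PiE)
  also have "\<dots> = card P ^ card B"
    using fin by (simp add: card_PiE)
  finally show ?thesis
    by (simp add: B_def)
qed

lemma expected_unreliable_count:
  "(\<Sum>c\<in>range (code n). prob_value (code n) c * card {i. i < n \<and> snd c ! i}) \<le> n * (2 * \<delta>)"
proof -
  have count: "real (card {i. i < n \<and> snd c ! i}) = (\<Sum>i<n. of_bool (snd c ! i))" for c
  proof -
    have "{..<n} \<inter> {i. snd c ! i} = {i. i < n \<and> snd c ! i}"
      by auto
    then show ?thesis
      by simp
  qed
  have "(\<Sum>c\<in>range (code n). prob_value (code n) c * card {i. i < n \<and> snd c ! i}) =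
      (\<Sum>c\<in>range (code n). \<Sum>i<n. prob_value (code n) c * of_bool (snd c ! i))"
    by (simp only: count sum_distrib_left)
  also have "\<dots> = (\<Sum>i<n. \<Sum>c\<in>range (code n). prob_value (code n) c * of_bool (snd c ! i))"
    by (rule sum.swap)
  also have "\<dots> = (\<Sum>i<n. prob_value (unreliable i) True)"
  proof (intro sum.cong refl)
    fix i assume "i \<in> {..<n}"
    then have eq: "(\<lambda>z. snd (code n z) ! i) = unreliable i"
      by (auto simp: code_def)
    show "(\<Sum>c\<in>range (code n). prob_value (code n) c * of_bool (snd c ! i)) = prob_value (unreliable i) True"
      using sum_prob_value_comp[OF simple_function_code, of n of_bool "\<lambda>c. snd c ! i"]
        sum_prob_value_of_bool[OF simple_function_unreliable, of i]
      by (simp only: space_eq eq)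
  qed
  also have "\<dots> \<le> (\<Sum>i<n. 2 * \<delta>)"
    by (intro sum_mono prob_unreliable)
  finally show ?thesis
    by simp
qed

lemma simple_entropy_code_le:
  "simple_entropy (code n) \<le> ln (card (range window_code)) + n * (3 * sqrt (2 * \<delta>))"
proof -
  have "simple_entropy (code n) \<le> simple_entropy window_code + (\<Sum>i\<leftarrow>[0..<n]. simple_entropy (unreliable i))"
    using simple_entropy_pair_le[OF simple_function_window_code
        simple_function_map[of "[0..<n]" \<mu> unreliable, OF simple_function_unreliable]]
      simple_entropy_map_le[of "[0..<n]" unreliable, OF simple_function_unreliable]
    unfolding code_def[abs_def] by simp
  also have "simple_entropy window_code \<le> ln (card (range window_code))"
    using simple_entropy_le_ln_card[OF simple_function_window_code] by simp
  also have "(\<Sum>i\<leftarrow>[0..<n]. simple_entropy (unreliable i)) \<le> (\<Sum>i\<leftarrow>[0..<n]. 3 * sqrt (2 * \<delta>))"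
    by (intro sum_list_mono simple_entropy_bool_le simple_function_unreliable prob_unreliable)
  finally show ?thesis
    by (simp add: sum_list_triv)
qed

lemma ln_card_itinerary_fiber_le:
  "ln (card (itinerary F P n ` (code n -` {c}))) \<le> card {i. i < n \<and> snd c ! i} * ln (card P)"
proof -
  have P: "card P \<ge> 1"
    using card_partition_pos[OF partition] by simp
  show ?thesis
  proof (cases "itinerary F P n ` (code n -` {c}) = {}")
    case False
    have "finite (itinerary F P n ` (code n -` {c}))"
      using simple_functionD(1)[OF simple_function_itinerary[OF partition measurable_F, of n]]
      by (rule finite_subset[rotated]) auto
    then have "0 < card (itinerary F P n ` (code n -` {c}))"
      using False by (simp add: card_gt_0_iff)
    then have "ln (card (itinerary F P n ` (code n -` {c}))) \<le> ln (card P ^ card {i. i < n \<and> snd c ! i})"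
      using card_itinerary_fiber[of n c] by (intro ln_mono) (simp_all only: of_nat_le_iff of_nat_0_less_iff)
    also have "\<dots> = card {i. i < n \<and> snd c ! i} * ln (card P)"
      using P by (simp add: ln_realpow)
    finally show ?thesis .
  qed (use P in simp)
qed

lemma simple_entropy_itinerary_le:
  "simple_entropy (itinerary F P n) \<le>
    ln (card (range window_code)) + n * (3 * sqrt (2 * \<delta>) + 2 * \<delta> * ln (card P))"
proof -
  have "simple_entropy (itinerary F P n) \<le> simple_entropy (code n) +
      (\<Sum>c\<in>range (code n). prob_value (code n) c * ln (card (itinerary F P n ` (code n -` {c}))))"
    using simple_entropy_le_fibers[OF simple_function_itinerary[OF partition measurable_F] simple_function_code]
    by simp
  also have "(\<Sum>c\<in>range (code n). prob_value (code n) c * ln (card (itinerary F P n ` (code n -` {c})))) \<le>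
      (\<Sum>c\<in>range (code n). prob_value (code n) c * (card {i. i < n \<and> snd c ! i} * ln (card P)))"
    by (intro sum_mono mult_left_mono ln_card_itinerary_fiber_le prob_value_nonneg)
  also have "\<dots> = ln (card P) * (\<Sum>c\<in>range (code n). prob_value (code n) c * card {i. i < n \<and> snd c ! i})"
    by (simp add: sum_distrib_left mult_ac)
  also have "\<dots> \<le> ln (card P) * (n * (2 * \<delta>))"
    using card_partition_pos[OF partition] by (intro mult_left_mono expected_unreliable_count) simp
  also note simple_entropy_code_le
  finally show ?thesis
    by (simp add: algebra_simps)
qed

end

lemma ex_entropy_parameter:
  fixes \<epsilon> L :: real
  assumes "\<epsilon> > 0" "L \<ge> 0"
  shows "\<exists>\<delta>>0. 3 * sqrt (2 * \<delta>) + 2 * \<delta> * L \<le> \<epsilon> / 2"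
proof (intro exI conjI)
  define \<delta> where "\<delta> = min (\<epsilon>\<^sup>2 / 288) (\<epsilon> / (8 * (L + 1)))"
  show "\<delta> > 0"
    using assms by (simp add: \<delta>_def)
  have "3 * sqrt (2 * \<delta>) \<le> 3 * sqrt ((\<epsilon> / 12)\<^sup>2)"
    by (simp add: \<delta>_def power_divide)
  also have "\<dots> = \<epsilon> / 4"
    using assms by simp
  finally have "3 * sqrt (2 * \<delta>) \<le> \<epsilon> / 4" .
  moreover have "2 * \<delta> * L \<le> 2 * (\<epsilon> / (8 * (L + 1))) * L"
    using assms by (intro mult_right_mono) (auto simp: \<delta>_def)
  moreover have "2 * (\<epsilon> / (8 * (L + 1))) * L \<le> \<epsilon> / 4"
    using assms by (simp add: field_simps)
  ultimately show "3 * sqrt (2 * \<delta>) + 2 * \<delta> * L \<le> \<epsilon> / 2"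
    by linarith
qed

lemma eventually_le_of_affine_bound:
  fixes \<epsilon> C :: real
  assumes "\<epsilon> > 0" "\<And>n. h n \<le> C + real n * (\<epsilon> / 2)"
  shows "\<forall>\<^sub>F n in sequentially. h n \<le> \<epsilon> * real n"
  using eventually_ge_at_top[of "nat \<lceil>2 * C / \<epsilon>\<rceil>"]
proof (rule eventually_mono)
  fix n assume "nat \<lceil>2 * C / \<epsilon>\<rceil> \<le> n"
  then have "2 * C / \<epsilon> \<le> real n"
    by linarith
  then have "C \<le> real n * (\<epsilon> / 2)"
    using assms(1) by (simp add: field_simps)
  then show "h n \<le> \<epsilon> * real n"
    using assms(2)[of n] field_sum_of_halves[of "\<epsilon> * real n"] by (simp add: algebra_simps)
qed

context ca_measure
begin

lemma ex_wall_measure_pos: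
  assumes "mu_equicontinuous \<mu> F r"
  shows "\<exists>x0. measure \<mu> (wall F r x0 0) > 0"
proof -
  obtain x0 where "emeasure \<mu> (Bball F r x0) > 0"
    using assms unfolding mu_equicontinuous_def by blast
  then have "emeasure \<mu> (wall F r x0 0) > 0"
    using emeasure_mono[OF Bball_subset_wall wall_sets] by (simp add: less_le_trans)
  then show ?thesis
    by (auto simp: emeasure_eq_measure)
qed

lemma itinerary_entropy_sublinear:
  fixes \<epsilon> :: real
  assumes "mu_equicontinuous \<mu> F r" and P: "finite_meas_partition \<mu> P" and "\<epsilon> > 0"
  shows "\<forall>\<^sub>F n in sequentially. simple_entropy (itinerary F P n) \<le> \<epsilon> * real n"
proof -
  obtain x0 where wall_pos: "measure \<mu> (wall F r x0 0) > 0"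
    using ex_wall_measure_pos[OF assms(1)] by blast
  have "ln (card P) \<ge> 0"
    using card_partition_pos[OF P] by simp
  then obtain \<delta> where "\<delta> > 0" and \<delta>: "3 * sqrt (2 * \<delta>) + 2 * \<delta> * ln (card P) \<le> \<epsilon> / 2"
    using ex_entropy_parameter[OF \<open>\<epsilon> > 0\<close>] by blast
  obtain D k \<psi> where D: "D \<in> sets \<mu>" "measure \<mu> D \<le> \<delta>"
    and \<psi>: "depends_on_window k \<psi>" and cell: "\<And>z. z \<notin> D \<Longrightarrow> cell P z = \<psi> z"
    using partition_local_approx[OF P \<open>\<delta> > 0\<close>] by metis
  obtain m where walled: "measure \<mu> (UNIV - walled F r x0 k m) \<le> \<delta>"
    using measure_walled[OF wall_pos \<open>\<delta> > 0\<close>] .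
  interpret itinerary_code F r \<mu> P \<delta> D \<psi> k x0 m
    by (rule itinerary_code.intro[OF ca_measure_axioms itinerary_code_axioms.intro[OF P D \<psi> cell walled]])
  have "simple_entropy (itinerary F P n) \<le> ln (card (range window_code)) + real n * (\<epsilon> / 2)" for n
    using simple_entropy_itinerary_le[of n] mult_left_mono[OF \<delta>, of "real n"] by simp
  then show ?thesis
    by (rule eventually_le_of_affine_bound[OF \<open>\<epsilon> > 0\<close>])
qed

end

theorem corollary1:
  fixes F :: "(int \<Rightarrow> 'a::finite) \<Rightarrow> (int \<Rightarrow> 'a)"
    and r :: nat
    and \<mu> :: "(int \<Rightarrow> 'a) measure"
  assumes "cellular_automaton F r"
    and "prob_space \<mu>"
    and "sets \<mu> = sets full_shift_space"
    and "ergodic \<mu> shift"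
    and "invariant_measure \<mu> F"
    and "mu_equicontinuous \<mu> F r"
  shows "ks_entropy \<mu> F = 0"
proof -
  interpret ca_measure F r \<mu>
    using assms(1-5) by (rule ca_measure.intro)
  show ?thesis
  proof (rule ks_entropy_eq_0)
    fix P assume P: "finite_meas_partition \<mu> P"
    show "partition_entropy_rate \<mu> F P = 0"
      using itinerary_entropy_sublinear[OF assms(6) P] simple_entropy_nonneg
      by (intro partition_entropy_rate_eq_0) (simp_all add: partition_entropy_iter_join[OF P measurable_F])
  qed
qed

end
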